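(* Let $F_0$ be a probability distribution on $\mathbb{R}$ with $\int|z|\,dF_0(z)<\infty$. Let $\alpha,\alpha_0,\beta,\beta_0\in\mathbb{R}$, $\sigma,\sigma_0,\tau,\tau_0>0$, $\epsilon>0$, and write $\theta=(\alpha,\beta,\sigma,\tau)$, $\theta_0=(\alpha_0,\beta_0,\sigma_0,\tau_0)$. Suppose \[ \frac{3|\sigma^2-\sigma_0^2|}{2\sigma_0^2}\le\epsilon,\quad \frac{3|\tau^2-\tau_0^2|}{2\tau_0^2}\le\epsilon,\quad \frac{|\alpha-\alpha_0|}{\tau_0}\le\epsilon,\quad \frac{|\beta-\beta_0|}{\tau_0}\int|z|\,dF_0(z)\le\epsilon. \] Then $\|p_{\theta,F_0}-p_{\theta_0,F_0}\|_1\le 4\epsilon$.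
   Context: Errors-in-variables model: for $\theta=(\alpha,\beta,\sigma,\tau)$ and a probability measure $F$ on $\mathbb{R}$, $p_{\theta,F}(x,y)=\int\phi_\sigma(x-z)\,\phi_\tau(y-\alpha-\beta z)\,dF(z)$ for $(x,y)\in\mathbb{R}^2$, where $\phi_s$ is the density of the normal distribution with mean $0$ and variance $s^2$. $\|\cdot\|_1$ is the $L^1$ norm with respect to Lebesgue measure on $\mathbb{R}^2$. *)

theory Defs
  imports "HOL-Probability.Probability"
begin

text \<open>Errors-in-variables mixture density p_{theta,F}(x,y), theta = (alpha, beta, sigma, tau);
  phi_s is the N(0, s^2) density, i.e. normal_density 0 s.\<close>
definition eiv_density :: "real \<Rightarrow> real \<Rightarrow> real \<Rightarrow> real \<Rightarrow> real measure \<Rightarrow> real \<times> real \<Rightarrow> real" where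
  "eiv_density \<alpha> \<beta> \<sigma> \<tau> F = (\<lambda>(x, y).
     \<integral>z. normal_density 0 \<sigma> (x - z) * normal_density 0 \<tau> (y - \<alpha> - \<beta> * z) \<partial>F)"

definition L1_dist :: "(real \<times> real \<Rightarrow> real) \<Rightarrow> (real \<times> real \<Rightarrow> real) \<Rightarrow> ennreal" where
  "L1_dist p q = (\<integral>\<^sup>+ w. ennreal \<bar>p w - q w\<bar> \<partial>lborel)"

end

theory Submission
  imports Defs
begin

(* Both densities are mixtures, over the same F0, of the product kernels
  N(z, sigma^2) x N(alpha + beta z, tau^2), so their L1 distance is at most the F0-average of the
  L1 distances of the kernels.  For fixed z the product structure reduces this to one-dimensional
  normal densities: rescaling from a to b <= a costs at most 2 (1 - b/a), because (b/a) phi_b is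
  a minorant of phi_a, and moving the centre by d costs at most sqrt(2/pi) |d| / s, by the
  fundamental theorem of calculus in the location parameter.  When epsilon < 1/2 the variance
  hypotheses make each scale term at most epsilon, and the shift term
  |alpha - alpha0| / tau0 + |beta - beta0| |z| / tau0 averages to at most 2 epsilon;
  when epsilon >= 1/2 the trivial bound 2 suffices. *)

section \<open>L1 distances of densities\<close>

lemma nn_integral_abs_integral_le:
  fixes f :: "'a \<Rightarrow> 'b \<Rightarrow> real"
  assumes "pair_sigma_finite M N" and "case_prod f \<in> borel_measurable (M \<Otimes>\<^sub>M N)"
  shows "(\<integral>\<^sup>+x. ennreal \<bar>\<integral>y. f x y \<partial>N\<bar> \<partial>M) \<le> (\<integral>\<^sup>+y. \<integral>\<^sup>+x. ennreal \<bar>f x y\<bar> \<partial>M \<partial>N)"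
proof -
  have "ennreal \<bar>\<integral>y. f x y \<partial>N\<bar> \<le> (\<integral>\<^sup>+y. ennreal \<bar>f x y\<bar> \<partial>N)" for x
  proof (cases "integrable N (f x)")
    case True
    then show ?thesis
      using integral_norm_bound_ennreal[of N "f x"] by simp
  next
    case False
    then show ?thesis
      by (simp add: not_integrable_integral_eq)
  qed
  then have "(\<integral>\<^sup>+x. ennreal \<bar>\<integral>y. f x y \<partial>N\<bar> \<partial>M) \<le> (\<integral>\<^sup>+x. \<integral>\<^sup>+y. ennreal \<bar>f x y\<bar> \<partial>N \<partial>M)"
    by (rule nn_integral_mono)
  also have "\<dots> = (\<integral>\<^sup>+y. \<integral>\<^sup>+x. ennreal \<bar>f x y\<bar> \<partial>M \<partial>N)"
    by (rule pair_sigma_finite.Fubini'[OF assms(1), symmetric]) (use assms(2) in measurable)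
  finally show ?thesis .
qed

lemma nn_integral_abs_diff_triangle:
  fixes f g h :: "'a \<Rightarrow> real"
  assumes [measurable]: "f \<in> borel_measurable M" "g \<in> borel_measurable M" "h \<in> borel_measurable M"
  shows "(\<integral>\<^sup>+x. ennreal \<bar>f x - h x\<bar> \<partial>M) \<le> (\<integral>\<^sup>+x. ennreal \<bar>f x - g x\<bar> \<partial>M) + (\<integral>\<^sup>+x. ennreal \<bar>g x - h x\<bar> \<partial>M)"
proof -
  have "(\<integral>\<^sup>+x. ennreal \<bar>f x - h x\<bar> \<partial>M) \<le> (\<integral>\<^sup>+x. ennreal \<bar>f x - g x\<bar> + ennreal \<bar>g x - h x\<bar> \<partial>M)"
    by (intro nn_integral_mono) (simp add: ennreal_plus[symmetric] del: ennreal_plus)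
  also have "\<dots> = (\<integral>\<^sup>+x. ennreal \<bar>f x - g x\<bar> \<partial>M) + (\<integral>\<^sup>+x. ennreal \<bar>g x - h x\<bar> \<partial>M)"
    by (rule nn_integral_add) auto
  finally show ?thesis .
qed

lemma nn_integral_abs_diff_le_add:
  fixes p q :: "'a \<Rightarrow> real"
  assumes [measurable]: "p \<in> borel_measurable M" "q \<in> borel_measurable M"
    and "\<And>x. 0 \<le> p x" "\<And>x. 0 \<le> q x"
  shows "(\<integral>\<^sup>+x. ennreal \<bar>p x - q x\<bar> \<partial>M) \<le> (\<integral>\<^sup>+x. p x \<partial>M) + (\<integral>\<^sup>+x. q x \<partial>M)"
proof -
  have "(\<integral>\<^sup>+x. ennreal \<bar>p x - q x\<bar> \<partial>M) \<le> (\<integral>\<^sup>+x. ennreal (p x) + ennreal (q x) \<partial>M)"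
  proof (intro nn_integral_mono)
    fix x
    have "\<bar>p x - q x\<bar> \<le> p x + q x"
      using assms(3,4)[of x] by (simp add: abs_le_iff)
    then show "ennreal \<bar>p x - q x\<bar> \<le> ennreal (p x) + ennreal (q x)"
      using assms(3,4)[of x] by (simp add: ennreal_plus[symmetric] del: ennreal_plus)
  qed
  also have "\<dots> = (\<integral>\<^sup>+x. p x \<partial>M) + (\<integral>\<^sup>+x. q x \<partial>M)"
    by (rule nn_integral_add) auto
  finally show ?thesis .
qed

lemma nn_integral_const_add_abs:
  fixes M :: "real measure"
  assumes "prob_space M" "integrable M abs" "0 \<le> a" "0 \<le> b"
  shows "(\<integral>\<^sup>+z. ennreal (a + b * \<bar>z\<bar>) \<partial>M) = ennreal (a + b * (\<integral>z. \<bar>z\<bar> \<partial>M))"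
proof -
  note const = finite_measure.integrable_const[OF prob_space.finite_measure[OF assms(1)]]
  have "integrable M (\<lambda>z. a + b * \<bar>z\<bar>)"
    by (intro Bochner_Integration.integrable_add integrable_mult_right const assms(2))
  then have "(\<integral>\<^sup>+z. ennreal (a + b * \<bar>z\<bar>) \<partial>M) = ennreal (\<integral>z. a + b * \<bar>z\<bar> \<partial>M)"
    using assms(3,4) by (intro nn_integral_eq_integral) auto
  also have "(\<integral>z. a + b * \<bar>z\<bar> \<partial>M) = (\<integral>z. a \<partial>M) + (\<integral>z. b * \<bar>z\<bar> \<partial>M)"
    by (rule Bochner_Integration.integral_add[OF const integrable_mult_right[OF assms(2)]])
  also have "\<dots> = a + b * (\<integral>z. \<bar>z\<bar> \<partial>M)"
    using prob_space.prob_space[OF assms(1)] by simp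
  finally show ?thesis .
qed

lemma nn_integral_abs_diff_le_scaled_minorant:
  fixes p q :: "'a \<Rightarrow> real"
  assumes "integrable M p" "integrable M q" "(\<integral>x. p x \<partial>M) = 1" "(\<integral>x. q x \<partial>M) = 1"
    and "\<And>x. 0 \<le> p x" "k \<le> 1" "\<And>x. k * p x \<le> q x"
  shows "(\<integral>\<^sup>+x. ennreal \<bar>p x - q x\<bar> \<partial>M) \<le> ennreal (2 * (1 - k))"
proof -
  have pointwise: "\<bar>p x - q x\<bar> \<le> q x + (1 - 2 * k) * p x" for x
    using assms(5,7)[of x] mult_right_mono[OF \<open>k \<le> 1\<close> assms(5)[of x]]
    by (auto simp: algebra_simps abs_if)
  have "(\<integral>\<^sup>+x. ennreal \<bar>p x - q x\<bar> \<partial>M) \<le> (\<integral>\<^sup>+x. ennreal (q x + (1 - 2 * k) * p x) \<partial>M)"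
    by (intro nn_integral_mono ennreal_leI pointwise)
  also have "\<dots> = ennreal (\<integral>x. q x + (1 - 2 * k) * p x \<partial>M)"
    using assms(1,2) pointwise[THEN order_trans[OF abs_ge_zero]]
    by (intro nn_integral_eq_integral) auto
  also have "(\<integral>x. q x + (1 - 2 * k) * p x \<partial>M) = 2 * (1 - k)"
    using assms(1-4) by simp
  finally show ?thesis .
qed

lemma nn_integral_abs_diff_product_le:
  fixes p0 p1 :: "'a \<Rightarrow> real" and q0 q1 :: "'b \<Rightarrow> real"
  assumes "sigma_finite_measure N"
    and [measurable]: "p0 \<in> borel_measurable M" "p1 \<in> borel_measurable M"
      "q0 \<in> borel_measurable N" "q1 \<in> borel_measurable N"
    and nonneg: "\<And>x. 0 \<le> p0 x" "\<And>y. 0 \<le> q1 y"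
    and total: "(\<integral>\<^sup>+x. p0 x \<partial>M) = 1" "(\<integral>\<^sup>+y. q1 y \<partial>N) = 1"
  shows "(\<integral>\<^sup>+w. ennreal \<bar>p1 (fst w) * q1 (snd w) - p0 (fst w) * q0 (snd w)\<bar> \<partial>(M \<Otimes>\<^sub>M N))
    \<le> (\<integral>\<^sup>+x. ennreal \<bar>p1 x - p0 x\<bar> \<partial>M) + (\<integral>\<^sup>+y. ennreal \<bar>q1 y - q0 y\<bar> \<partial>N)"
proof -
  have pointwise: "ennreal \<bar>p1 x * q1 y - p0 x * q0 y\<bar>
      \<le> ennreal \<bar>p1 x - p0 x\<bar> * ennreal (q1 y) + ennreal (p0 x) * ennreal \<bar>q1 y - q0 y\<bar>" for x y
  proof -
    have "p1 x * q1 y - p0 x * q0 y = (p1 x - p0 x) * q1 y + p0 x * (q1 y - q0 y)"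
      by (simp add: algebra_simps)
    then have "\<bar>p1 x * q1 y - p0 x * q0 y\<bar> \<le> \<bar>p1 x - p0 x\<bar> * q1 y + p0 x * \<bar>q1 y - q0 y\<bar>"
      using abs_triangle_ineq[of "(p1 x - p0 x) * q1 y" "p0 x * (q1 y - q0 y)"] nonneg(1)[of x] nonneg(2)[of y]
      by (simp add: abs_mult)
    then have "ennreal \<bar>p1 x * q1 y - p0 x * q0 y\<bar>
        \<le> ennreal (\<bar>p1 x - p0 x\<bar> * q1 y + p0 x * \<bar>q1 y - q0 y\<bar>)"
      by (rule ennreal_leI)
    also have "\<dots> = ennreal \<bar>p1 x - p0 x\<bar> * ennreal (q1 y) + ennreal (p0 x) * ennreal \<bar>q1 y - q0 y\<bar>"
      using nonneg(1)[of x] nonneg(2)[of y] by (simp add: ennreal_mult)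
    finally show ?thesis .
  qed
  have "(\<integral>\<^sup>+w. ennreal \<bar>p1 (fst w) * q1 (snd w) - p0 (fst w) * q0 (snd w)\<bar> \<partial>(M \<Otimes>\<^sub>M N))
      = (\<integral>\<^sup>+x. \<integral>\<^sup>+y. ennreal \<bar>p1 x * q1 y - p0 x * q0 y\<bar> \<partial>N \<partial>M)"
    by (subst sigma_finite_measure.nn_integral_fst[OF assms(1), symmetric]) auto
  also have "\<dots> \<le> (\<integral>\<^sup>+x. \<integral>\<^sup>+y. ennreal \<bar>p1 x - p0 x\<bar> * ennreal (q1 y)
      + ennreal (p0 x) * ennreal \<bar>q1 y - q0 y\<bar> \<partial>N \<partial>M)"
    by (intro nn_integral_mono pointwise)
  also have "\<dots> = (\<integral>\<^sup>+x. ennreal \<bar>p1 x - p0 x\<bar> + ennreal (p0 x) * (\<integral>\<^sup>+y. ennreal \<bar>q1 y - q0 y\<bar> \<partial>N) \<partial>M)"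
    using total by (simp add: nn_integral_add nn_integral_cmult)
  also have "\<dots> = (\<integral>\<^sup>+x. ennreal \<bar>p1 x - p0 x\<bar> \<partial>M) + (\<integral>\<^sup>+y. ennreal \<bar>q1 y - q0 y\<bar> \<partial>N)"
    using total by (simp add: nn_integral_add nn_integral_multc)
  finally show ?thesis .
qed

lemma abs_diff_le_set_nn_integral_deriv:
  fixes f f' :: "real \<Rightarrow> real"
  assumes "a \<le> b" "\<And>u. (f has_real_derivative f' u) (at u)" "continuous_on UNIV f'"
  shows "ennreal \<bar>f b - f a\<bar> \<le> (\<integral>\<^sup>+u\<in>{a..b}. ennreal \<bar>f' u\<bar> \<partial>lborel)"
proof -
  have cont: "continuous_on {a..b} f'"
    using assms(3) by (rule continuous_on_subset) simp
  have "f b - f a = (LBINT u=a..b. f' u)"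
    using assms(1,2) cont
    by (intro interval_integral_FTC_finite[symmetric])
       (auto simp: has_real_derivative_iff_has_vector_derivative[symmetric] intro: has_field_derivative_at_within)
  also have "\<dots> = (LBINT u:{a..b}. f' u)"
    using assms(1) by (rule interval_integral_Icc)
  finally have "ennreal \<bar>f b - f a\<bar> \<le> (\<integral>\<^sup>+u. norm (indicator {a..b} u *\<^sub>R f' u) \<partial>lborel)"
    using borel_integrable_atLeastAtMost'[OF cont] integral_norm_bound_ennreal
    unfolding set_lebesgue_integral_def set_integrable_def by (metis real_norm_def)
  also have "\<dots> = (\<integral>\<^sup>+u\<in>{a..b}. ennreal \<bar>f' u\<bar> \<partial>lborel)"
    by (intro nn_integral_cong) (auto simp: indicator_def)
  finally show ?thesis .
qed

lemma nn_integral_lborel_translate: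
  fixes g :: "real \<Rightarrow> ennreal"
  assumes "g \<in> borel_measurable borel"
  shows "(\<integral>\<^sup>+y. g (y - u) \<partial>lborel) = (\<integral>\<^sup>+x. g x \<partial>lborel)"
  using nn_integral_real_affine[OF assms, of 1 "-u"] by simp

lemma nn_integral_abs_diff_translate_le:
  fixes f f' :: "real \<Rightarrow> real"
  assumes deriv: "\<And>x. (f has_real_derivative f' x) (at x)" and cont: "continuous_on UNIV f'"
  shows "(\<integral>\<^sup>+y. ennreal \<bar>f (y - c1) - f (y - c0)\<bar> \<partial>lborel)
    \<le> ennreal \<bar>c1 - c0\<bar> * (\<integral>\<^sup>+x. ennreal \<bar>f' x\<bar> \<partial>lborel)"
proof -
  have [measurable]: "f' \<in> borel_measurable borel"
    using cont by (rule borel_measurable_continuous_onI)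
  have ordered: "(\<integral>\<^sup>+y. ennreal \<bar>f (y - b) - f (y - a)\<bar> \<partial>lborel)
      \<le> ennreal (b - a) * (\<integral>\<^sup>+x. ennreal \<bar>f' x\<bar> \<partial>lborel)" if "a \<le> b" for a b
  proof -
    have "ennreal \<bar>f (y - b) - f (y - a)\<bar> \<le> (\<integral>\<^sup>+u\<in>{a..b}. ennreal \<bar>- f' (y - u)\<bar> \<partial>lborel)" for y
    proof (rule abs_diff_le_set_nn_integral_deriv[OF \<open>a \<le> b\<close>])
      show "((\<lambda>u. f (y - u)) has_real_derivative - f' (y - u)) (at u)" for u
      proof -
        have "((\<lambda>u. y - u) has_real_derivative -1) (at u)"
          by (auto intro!: derivative_eq_intros)
        from DERIV_chain2[OF deriv this] show ?thesis by simp
      qed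
      show "continuous_on UNIV (\<lambda>u. - f' (y - u))"
        by (intro continuous_intros continuous_on_compose2[OF cont]) auto
    qed
    then have "(\<integral>\<^sup>+y. ennreal \<bar>f (y - b) - f (y - a)\<bar> \<partial>lborel)
        \<le> (\<integral>\<^sup>+y. \<integral>\<^sup>+u. ennreal \<bar>f' (y - u)\<bar> * indicator {a..b} u \<partial>lborel \<partial>lborel)"
      by (intro nn_integral_mono) simp
    also have "\<dots> = (\<integral>\<^sup>+u. \<integral>\<^sup>+y. ennreal \<bar>f' (y - u)\<bar> * indicator {a..b} u \<partial>lborel \<partial>lborel)"
      by (rule pair_sigma_finite.Fubini'[OF pair_sigma_finite.intro[OF sigma_finite_lborel sigma_finite_lborel]]) measurable
    also have "\<dots> = (\<integral>\<^sup>+u. (\<integral>\<^sup>+x. ennreal \<bar>f' x\<bar> \<partial>lborel) * indicator {a..b} u \<partial>lborel)"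
      by (simp add: nn_integral_multc nn_integral_lborel_translate[of "\<lambda>x. ennreal \<bar>f' x\<bar>"])
    also have "\<dots> = ennreal (b - a) * (\<integral>\<^sup>+x. ennreal \<bar>f' x\<bar> \<partial>lborel)"
      using that by (subst nn_integral_cmult_indicator) (auto simp: mult.commute)
    finally show ?thesis .
  qed
  show ?thesis
  proof (cases "c0 \<le> c1")
    case True
    then show ?thesis using ordered[of c0 c1] by simp
  next
    case False
    then show ?thesis using ordered[of c1 c0] by (simp add: abs_minus_commute)
  qed
qed

section \<open>Normal densities\<close>

lemma normal_density_centered: "normal_density 0 \<sigma> (x - \<mu>) = normal_density \<mu> \<sigma> x"
  by (simp add: normal_density_def)

(* No positivity hypothesis: for sigma = 0 both sides are 0, since 1 / 0 = 0. *)
lemma normal_density_le: "normal_density \<mu> \<sigma> x \<le> 1 / sqrt (2 * pi * \<sigma>\<^sup>2)"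
  unfolding normal_density_def by (intro mult_left_le) auto

lemma nn_integral_normal_density:
  "0 < \<sigma> \<Longrightarrow> (\<integral>\<^sup>+x. ennreal (normal_density \<mu> \<sigma> x) \<partial>lborel) = 1"
  by (subst nn_integral_eq_integral) auto

lemma normal_density_scale_le:
  assumes "0 < a" "a \<le> b"
  shows "a / b * normal_density \<mu> a x \<le> normal_density \<mu> b x"
proof -
  have "(x - \<mu>)\<^sup>2 / (2 * b\<^sup>2) \<le> (x - \<mu>)\<^sup>2 / (2 * a\<^sup>2)"
    using assms by (intro divide_left_mono mult_left_mono power_mono) auto
  then have "exp (- (x - \<mu>)\<^sup>2 / (2 * a\<^sup>2)) \<le> exp (- (x - \<mu>)\<^sup>2 / (2 * b\<^sup>2))"
    by simp
  moreover have "sqrt (2 * pi * s\<^sup>2) = sqrt (2 * pi) * s" if "0 < s" for s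
    using that by (simp add: real_sqrt_mult)
  ultimately show ?thesis
    using assms by (simp add: normal_density_def divide_right_mono mult.commute[of "sqrt (2 * pi)"])
qed

lemma nn_integral_abs_diff_normal_density_scale:
  assumes "0 < a" "0 < b"
  shows "(\<integral>\<^sup>+x. ennreal \<bar>normal_density \<mu> a x - normal_density \<mu> b x\<bar> \<partial>lborel)
    \<le> ennreal (2 * (1 - min a b / max a b))"
proof -
  have ordered: "(\<integral>\<^sup>+x. ennreal \<bar>normal_density \<mu> a x - normal_density \<mu> b x\<bar> \<partial>lborel)
      \<le> ennreal (2 * (1 - a / b))" if "0 < a" "a \<le> b" for a b
    using that normal_density_scale_le[OF that]
    by (intro nn_integral_abs_diff_le_scaled_minorant) auto
  show ?thesis
  proof (cases "a \<le> b")
    case True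
    then show ?thesis using ordered[OF assms(1)] by simp
  next
    case False
    then show ?thesis using ordered[OF assms(2), of a] by (simp add: abs_minus_commute)
  qed
qed

lemma normal_density_has_real_derivative:
  assumes "0 < \<sigma>"
  shows "(normal_density \<mu> \<sigma> has_real_derivative normal_density \<mu> \<sigma> x * (\<mu> - x) / \<sigma>\<^sup>2) (at x)"
proof -
  have "((\<lambda>x. - (x - \<mu>)\<^sup>2 / (2 * \<sigma>\<^sup>2)) has_real_derivative (\<mu> - x) / \<sigma>\<^sup>2) (at x)"
    using assms by (auto intro!: derivative_eq_intros simp: power2_eq_square field_simps)
  from DERIV_cmult[OF DERIV_chain2[OF DERIV_exp this], of "1 / sqrt (2 * pi * \<sigma>\<^sup>2)"]
  show ?thesis
    unfolding normal_density_def by (simp add: mult.assoc)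
qed

lemma nn_integral_abs_deriv_normal_density:
  assumes "0 < \<sigma>"
  shows "(\<integral>\<^sup>+x. ennreal \<bar>normal_density \<mu> \<sigma> x * (\<mu> - x) / \<sigma>\<^sup>2\<bar> \<partial>lborel) = ennreal (sqrt (2 / pi) / \<sigma>)"
proof -
  have "(\<integral>\<^sup>+x. ennreal \<bar>normal_density \<mu> \<sigma> x * (\<mu> - x) / \<sigma>\<^sup>2\<bar> \<partial>lborel)
      = (\<integral>\<^sup>+x. ennreal (normal_density \<mu> \<sigma> x * \<bar>x - \<mu>\<bar> ^ (2 * 0 + 1) / \<sigma>\<^sup>2) \<partial>lborel)"
    by (intro nn_integral_cong) (simp add: abs_mult abs_minus_commute)
  also have "\<dots> = ennreal (\<integral>x. normal_density \<mu> \<sigma> x * \<bar>x - \<mu>\<bar> ^ (2 * 0 + 1) / \<sigma>\<^sup>2 \<partial>lborel)"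
    by (rule nn_integral_eq_integral) (intro integrable_divide integrable_normal_moment_abs[OF assms], simp)
  also have "\<dots> = ennreal (\<sigma> * sqrt (2 / pi) / \<sigma>\<^sup>2)"
    using integral_normal_moment_abs_odd[OF assms, where k = 0 and \<mu> = \<mu>] by simp
  also have "\<dots> = ennreal (sqrt (2 / pi) / \<sigma>)"
    using assms by (simp add: power2_eq_square)
  finally show ?thesis .
qed

lemma nn_integral_abs_diff_normal_density_shift:
  assumes "0 < \<sigma>"
  shows "(\<integral>\<^sup>+y. ennreal \<bar>normal_density c1 \<sigma> y - normal_density c0 \<sigma> y\<bar> \<partial>lborel)
    \<le> ennreal (sqrt (2 / pi) * \<bar>c1 - c0\<bar> / \<sigma>)"
proof -
  have "(\<integral>\<^sup>+y. ennreal \<bar>normal_density c1 \<sigma> y - normal_density c0 \<sigma> y\<bar> \<partial>lborel)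
      \<le> ennreal \<bar>c1 - c0\<bar> * (\<integral>\<^sup>+x. ennreal \<bar>normal_density 0 \<sigma> x * (0 - x) / \<sigma>\<^sup>2\<bar> \<partial>lborel)"
  proof -
    have "continuous_on UNIV (\<lambda>x. normal_density 0 \<sigma> x * (0 - x) / \<sigma>\<^sup>2)"
      unfolding normal_density_def by (intro continuous_intros) (use assms in auto)
    from nn_integral_abs_diff_translate_le[OF normal_density_has_real_derivative[OF assms] this]
    show ?thesis by (simp add: normal_density_centered)
  qed
  also have "\<dots> = ennreal \<bar>c1 - c0\<bar> * ennreal (sqrt (2 / pi) / \<sigma>)"
    by (simp only: nn_integral_abs_deriv_normal_density[OF assms])
  also have "\<dots> = ennreal (sqrt (2 / pi) * \<bar>c1 - c0\<bar> / \<sigma>)"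
    using assms by (subst ennreal_mult[symmetric]) (auto simp: ac_simps)
  finally show ?thesis .
qed

lemma nn_integral_normal_density_pair:
  assumes "0 < \<sigma>" "0 < \<tau>"
  shows "(\<integral>\<^sup>+w. ennreal (normal_density \<mu> \<sigma> (fst w) * normal_density \<nu> \<tau> (snd w)) \<partial>lborel) = 1"
  using assms
  by (simp add: lborel_prod[symmetric] sigma_finite_measure.nn_integral_fst[OF sigma_finite_lborel, symmetric] ennreal_mult
      nn_integral_cmult nn_integral_multc nn_integral_normal_density)

lemma nn_integral_abs_diff_normal_pair:
  assumes "0 < \<sigma>" "0 < \<sigma>0" "0 < \<tau>" "0 < \<tau>0"
  shows "(\<integral>\<^sup>+w. ennreal \<bar>normal_density \<mu> \<sigma> (fst w) * normal_density \<nu> \<tau> (snd w)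
      - normal_density \<mu> \<sigma>0 (fst w) * normal_density \<nu>0 \<tau>0 (snd w)\<bar> \<partial>lborel)
    \<le> ennreal (2 * (1 - min \<sigma> \<sigma>0 / max \<sigma> \<sigma>0)) + ennreal (2 * (1 - min \<tau> \<tau>0 / max \<tau> \<tau>0))
      + ennreal (\<bar>\<nu> - \<nu>0\<bar> / \<tau>0)"
proof -
  have "(\<integral>\<^sup>+w. ennreal \<bar>normal_density \<mu> \<sigma> (fst w) * normal_density \<nu> \<tau> (snd w)
      - normal_density \<mu> \<sigma>0 (fst w) * normal_density \<nu>0 \<tau>0 (snd w)\<bar> \<partial>lborel)
    \<le> (\<integral>\<^sup>+x. ennreal \<bar>normal_density \<mu> \<sigma> x - normal_density \<mu> \<sigma>0 x\<bar> \<partial>lborel)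
      + (\<integral>\<^sup>+y. ennreal \<bar>normal_density \<nu> \<tau> y - normal_density \<nu>0 \<tau>0 y\<bar> \<partial>lborel)"
    unfolding lborel_prod[symmetric] using assms
    by (intro nn_integral_abs_diff_product_le) (auto simp: nn_integral_normal_density sigma_finite_lborel)
  also have "\<dots> \<le> ennreal (2 * (1 - min \<sigma> \<sigma>0 / max \<sigma> \<sigma>0))
      + ((\<integral>\<^sup>+y. ennreal \<bar>normal_density \<nu> \<tau> y - normal_density \<nu> \<tau>0 y\<bar> \<partial>lborel)
        + (\<integral>\<^sup>+y. ennreal \<bar>normal_density \<nu> \<tau>0 y - normal_density \<nu>0 \<tau>0 y\<bar> \<partial>lborel))"
    using assms by (intro add_mono nn_integral_abs_diff_normal_density_scale nn_integral_abs_diff_triangle) auto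
  also have "\<dots> \<le> ennreal (2 * (1 - min \<sigma> \<sigma>0 / max \<sigma> \<sigma>0))
      + (ennreal (2 * (1 - min \<tau> \<tau>0 / max \<tau> \<tau>0)) + ennreal (sqrt (2 / pi) * \<bar>\<nu> - \<nu>0\<bar> / \<tau>0))"
    using assms by (intro add_mono order_refl nn_integral_abs_diff_normal_density_scale
        nn_integral_abs_diff_normal_density_shift)
  also have "ennreal (sqrt (2 / pi) * \<bar>\<nu> - \<nu>0\<bar> / \<tau>0) \<le> ennreal (\<bar>\<nu> - \<nu>0\<bar> / \<tau>0)"
    using assms(4) pi_gt3 by (intro ennreal_leI divide_right_mono mult_left_le_one_le) auto
  finally show ?thesis
    by (simp add: add.assoc)
qed

section \<open>The errors-in-variables mixture\<close>

lemma two_one_minus_min_div_max_le: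
  fixes a a0 e :: real
  assumes a: "0 < a" and a0: "0 < a0"
    and rel: "3 * \<bar>a\<^sup>2 - a0\<^sup>2\<bar> / (2 * a0\<^sup>2) \<le> e" and "e < 1 / 2"
  shows "2 * (1 - min a a0 / max a a0) \<le> e"
proof -
  have "a0 \<le> 3 * a"
  proof (rule ccontr)
    assume "\<not> a0 \<le> 3 * a"
    then have "(3 * a)\<^sup>2 < a0\<^sup>2"
      using a by (intro power_strict_mono) auto
    then have "a0\<^sup>2 < 3 * \<bar>a\<^sup>2 - a0\<^sup>2\<bar>"
      using a0 by (simp add: power_mult_distrib abs_if)
    moreover have "3 * \<bar>a\<^sup>2 - a0\<^sup>2\<bar> < a0\<^sup>2"
    proof -
      have "3 * \<bar>a\<^sup>2 - a0\<^sup>2\<bar> \<le> 2 * e * a0\<^sup>2"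
        using rel a0 by (simp add: pos_divide_le_eq mult_ac)
      also have "\<dots> < 1 * a0\<^sup>2"
        using \<open>e < 1 / 2\<close> a0 by (intro mult_strict_right_mono) auto
      finally show ?thesis by simp
    qed
    ultimately show False by simp
  qed
  have "2 * (1 - min a a0 / max a a0) \<le> 2 * \<bar>a - a0\<bar> / a0"
  proof (cases "a \<le> a0")
    case True
    then show ?thesis using a0 by (simp add: field_simps)
  next
    case False
    then have "2 * (1 - min a a0 / max a a0) = 2 * \<bar>a - a0\<bar> / a"
      using a by (simp add: field_simps)
    also have "\<dots> \<le> 2 * \<bar>a - a0\<bar> / a0"
      using False a0 by (intro divide_left_mono) auto
    finally show ?thesis .
  qed
  also have "\<dots> = 4 * a0 * \<bar>a - a0\<bar> / (2 * a0\<^sup>2)"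
    using a0 by (simp add: power2_eq_square)
  also have "\<dots> \<le> 3 * (a + a0) * \<bar>a - a0\<bar> / (2 * a0\<^sup>2)"
    using \<open>a0 \<le> 3 * a\<close> by (intro divide_right_mono mult_right_mono) auto
  also have "\<dots> = 3 * \<bar>a\<^sup>2 - a0\<^sup>2\<bar> / (2 * a0\<^sup>2)"
  proof -
    have "a\<^sup>2 - a0\<^sup>2 = (a + a0) * (a - a0)"
      by (simp add: power2_eq_square algebra_simps)
    then show ?thesis
      using a a0 by (simp add: abs_mult)
  qed
  finally show ?thesis
    using rel by linarith
qed

definition eiv_kernel :: "real \<Rightarrow> real \<Rightarrow> real \<Rightarrow> real \<Rightarrow> real \<Rightarrow> real \<times> real \<Rightarrow> real" where
  "eiv_kernel \<alpha> \<beta> \<sigma> \<tau> z w = normal_density z \<sigma> (fst w) * normal_density (\<alpha> + \<beta> * z) \<tau> (snd w)"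

lemma eiv_density_eq_integral_kernel:
  "eiv_density \<alpha> \<beta> \<sigma> \<tau> F w = (\<integral>z. eiv_kernel \<alpha> \<beta> \<sigma> \<tau> z w \<partial>F)"
  by (cases w) (simp add: eiv_density_def eiv_kernel_def diff_diff_eq normal_density_centered)

lemma borel_measurable_eiv_kernel:
  "eiv_kernel \<alpha> \<beta> \<sigma> \<tau> z \<in> borel_measurable lborel"
  unfolding eiv_kernel_def[abs_def] lborel_prod[symmetric] by measurable

lemma integrable_eiv_kernel:
  assumes "prob_space F" "sets F = sets borel"
  shows "integrable F (\<lambda>z. eiv_kernel \<alpha> \<beta> \<sigma> \<tau> z w)"
proof (rule finite_measure.integrable_const_bound[OF prob_space.finite_measure[OF assms(1)]])
  show "AE z in F. norm (eiv_kernel \<alpha> \<beta> \<sigma> \<tau> z w) \<le> 1 / sqrt (2 * pi * \<sigma>\<^sup>2) * (1 / sqrt (2 * pi * \<tau>\<^sup>2))"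
    unfolding eiv_kernel_def real_norm_def abs_mult
    by (intro AE_I2 mult_mono) (auto simp: normal_density_le)
  show "(\<lambda>z. eiv_kernel \<alpha> \<beta> \<sigma> \<tau> z w) \<in> borel_measurable F"
    unfolding measurable_cong_sets[OF assms(2) refl] eiv_kernel_def normal_density_def by measurable
qed

lemma L1_dist_eiv_density_le:
  assumes "prob_space F" "sets F = sets borel"
  shows "L1_dist (eiv_density \<alpha> \<beta> \<sigma> \<tau> F) (eiv_density \<alpha>0 \<beta>0 \<sigma>0 \<tau>0 F)
    \<le> (\<integral>\<^sup>+z. \<integral>\<^sup>+w. ennreal \<bar>eiv_kernel \<alpha> \<beta> \<sigma> \<tau> z w - eiv_kernel \<alpha>0 \<beta>0 \<sigma>0 \<tau>0 z w\<bar> \<partial>lborel \<partial>F)"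
proof -
  have pair_sets: "sets (lborel \<Otimes>\<^sub>M F) = sets ((borel \<Otimes>\<^sub>M borel) \<Otimes>\<^sub>M (borel :: real measure))"
    by (intro sets_pair_measure_cong assms(2)) (simp only: borel_prod sets_lborel)
  have "L1_dist (eiv_density \<alpha> \<beta> \<sigma> \<tau> F) (eiv_density \<alpha>0 \<beta>0 \<sigma>0 \<tau>0 F)
      = (\<integral>\<^sup>+w. ennreal \<bar>\<integral>z. eiv_kernel \<alpha> \<beta> \<sigma> \<tau> z w - eiv_kernel \<alpha>0 \<beta>0 \<sigma>0 \<tau>0 z w \<partial>F\<bar> \<partial>lborel)"
    unfolding L1_dist_def eiv_density_eq_integral_kernel
    by (simp add: Bochner_Integration.integral_diff integrable_eiv_kernel[OF assms])
  also have "\<dots> \<le> (\<integral>\<^sup>+z. \<integral>\<^sup>+w. ennreal \<bar>eiv_kernel \<alpha> \<beta> \<sigma> \<tau> z w - eiv_kernel \<alpha>0 \<beta>0 \<sigma>0 \<tau>0 z w\<bar> \<partial>lborel \<partial>F)"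
  proof (rule nn_integral_abs_integral_le)
    show "pair_sigma_finite lborel F"
      by (intro pair_sigma_finite.intro sigma_finite_lborel prob_space_imp_sigma_finite assms(1))
    show "(\<lambda>(w, z). eiv_kernel \<alpha> \<beta> \<sigma> \<tau> z w - eiv_kernel \<alpha>0 \<beta>0 \<sigma>0 \<tau>0 z w)
        \<in> borel_measurable (lborel \<Otimes>\<^sub>M F)"
      unfolding measurable_cong_sets[OF pair_sets refl] eiv_kernel_def normal_density_def by measurable
  qed
  finally show ?thesis .
qed

lemma nn_integral_abs_diff_eiv_kernel_le_2:
  assumes "0 < \<sigma>" "0 < \<sigma>0" "0 < \<tau>" "0 < \<tau>0"
  shows "(\<integral>\<^sup>+w. ennreal \<bar>eiv_kernel \<alpha> \<beta> \<sigma> \<tau> z w - eiv_kernel \<alpha>0 \<beta>0 \<sigma>0 \<tau>0 z w\<bar> \<partial>lborel) \<le> 2"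
proof -
  have "(\<integral>\<^sup>+w. ennreal \<bar>eiv_kernel \<alpha> \<beta> \<sigma> \<tau> z w - eiv_kernel \<alpha>0 \<beta>0 \<sigma>0 \<tau>0 z w\<bar> \<partial>lborel)
      \<le> (\<integral>\<^sup>+w. eiv_kernel \<alpha> \<beta> \<sigma> \<tau> z w \<partial>lborel) + (\<integral>\<^sup>+w. eiv_kernel \<alpha>0 \<beta>0 \<sigma>0 \<tau>0 z w \<partial>lborel)"
    by (rule nn_integral_abs_diff_le_add[OF borel_measurable_eiv_kernel borel_measurable_eiv_kernel])
       (simp_all add: eiv_kernel_def)
  also have "\<dots> = 2"
    using assms by (simp add: eiv_kernel_def nn_integral_normal_density_pair one_add_one)
  finally show ?thesis .
qed

lemma nn_integral_abs_diff_eiv_kernel_le: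
  assumes "0 < \<sigma>" "0 < \<sigma>0" "0 < \<tau>" "0 < \<tau>0" "e < 1 / 2"
    and "3 * \<bar>\<sigma>\<^sup>2 - \<sigma>0\<^sup>2\<bar> / (2 * \<sigma>0\<^sup>2) \<le> e" "3 * \<bar>\<tau>\<^sup>2 - \<tau>0\<^sup>2\<bar> / (2 * \<tau>0\<^sup>2) \<le> e"
  shows "(\<integral>\<^sup>+w. ennreal \<bar>eiv_kernel \<alpha> \<beta> \<sigma> \<tau> z w - eiv_kernel \<alpha>0 \<beta>0 \<sigma>0 \<tau>0 z w\<bar> \<partial>lborel)
    \<le> ennreal (2 * e + \<bar>\<alpha> - \<alpha>0\<bar> / \<tau>0 + \<bar>\<beta> - \<beta>0\<bar> / \<tau>0 * \<bar>z\<bar>)"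
proof -
  have e: "0 \<le> e"
    using assms(6) by (rule order_trans[rotated]) simp
  have "(\<alpha> + \<beta> * z) - (\<alpha>0 + \<beta>0 * z) = (\<alpha> - \<alpha>0) + (\<beta> - \<beta>0) * z"
    by (simp add: algebra_simps)
  then have "\<bar>(\<alpha> + \<beta> * z) - (\<alpha>0 + \<beta>0 * z)\<bar> \<le> \<bar>\<alpha> - \<alpha>0\<bar> + \<bar>\<beta> - \<beta>0\<bar> * \<bar>z\<bar>"
    using abs_triangle_ineq[of "\<alpha> - \<alpha>0" "(\<beta> - \<beta>0) * z"] by (simp add: abs_mult)
  then have shift: "\<bar>(\<alpha> + \<beta> * z) - (\<alpha>0 + \<beta>0 * z)\<bar> / \<tau>0 \<le> \<bar>\<alpha> - \<alpha>0\<bar> / \<tau>0 + \<bar>\<beta> - \<beta>0\<bar> / \<tau>0 * \<bar>z\<bar>"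
    using assms(4) by (simp add: add_divide_distrib[symmetric] divide_right_mono)
  have "(\<integral>\<^sup>+w. ennreal \<bar>eiv_kernel \<alpha> \<beta> \<sigma> \<tau> z w - eiv_kernel \<alpha>0 \<beta>0 \<sigma>0 \<tau>0 z w\<bar> \<partial>lborel)
      \<le> ennreal (2 * (1 - min \<sigma> \<sigma>0 / max \<sigma> \<sigma>0)) + ennreal (2 * (1 - min \<tau> \<tau>0 / max \<tau> \<tau>0))
        + ennreal (\<bar>(\<alpha> + \<beta> * z) - (\<alpha>0 + \<beta>0 * z)\<bar> / \<tau>0)"
    unfolding eiv_kernel_def using assms(1-4) by (rule nn_integral_abs_diff_normal_pair)
  also have "\<dots> \<le> ennreal e + ennreal e + ennreal (\<bar>\<alpha> - \<alpha>0\<bar> / \<tau>0 + \<bar>\<beta> - \<beta>0\<bar> / \<tau>0 * \<bar>z\<bar>)"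
    using two_one_minus_min_div_max_le[OF assms(1,2,6,5)] two_one_minus_min_div_max_le[OF assms(3,4,7,5)] shift
    by (intro add_mono ennreal_leI)
  also have "\<dots> = ennreal (2 * e + \<bar>\<alpha> - \<alpha>0\<bar> / \<tau>0 + \<bar>\<beta> - \<beta>0\<bar> / \<tau>0 * \<bar>z\<bar>)"
    using e assms(4) by (simp add: ennreal_plus[symmetric] del: ennreal_plus)
  finally show ?thesis .
qed

theorem mainTheorem9:
  fixes F0 :: "real measure" and \<alpha> \<alpha>0 \<beta> \<beta>0 \<sigma> \<sigma>0 \<tau> \<tau>0 \<epsilon> :: real
  assumes "prob_space F0" and "sets F0 = sets borel"
    and "integrable F0 (\<lambda>z. \<bar>z\<bar>)"
    and "\<sigma> > 0" "\<sigma>0 > 0" "\<tau> > 0" "\<tau>0 > 0" "\<epsilon> > 0"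
    and "3 * \<bar>\<sigma>\<^sup>2 - \<sigma>0\<^sup>2\<bar> / (2 * \<sigma>0\<^sup>2) \<le> \<epsilon>"
    and "3 * \<bar>\<tau>\<^sup>2 - \<tau>0\<^sup>2\<bar> / (2 * \<tau>0\<^sup>2) \<le> \<epsilon>"
    and "\<bar>\<alpha> - \<alpha>0\<bar> / \<tau>0 \<le> \<epsilon>"
    and "\<bar>\<beta> - \<beta>0\<bar> / \<tau>0 * (\<integral>z. \<bar>z\<bar> \<partial>F0) \<le> \<epsilon>"
  shows "L1_dist (eiv_density \<alpha> \<beta> \<sigma> \<tau> F0) (eiv_density \<alpha>0 \<beta>0 \<sigma>0 \<tau>0 F0) \<le> ennreal (4 * \<epsilon>)"
proof -
  let ?D = "\<lambda>z. \<integral>\<^sup>+w. ennreal \<bar>eiv_kernel \<alpha> \<beta> \<sigma> \<tau> z w - eiv_kernel \<alpha>0 \<beta>0 \<sigma>0 \<tau>0 z w\<bar> \<partial>lborel"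
  have "(\<integral>\<^sup>+z. ?D z \<partial>F0) \<le> ennreal (4 * \<epsilon>)"
  proof (cases "\<epsilon> < 1 / 2")
    case True
    let ?A = "\<bar>\<alpha> - \<alpha>0\<bar> / \<tau>0" and ?B = "\<bar>\<beta> - \<beta>0\<bar> / \<tau>0"
    have "(\<integral>\<^sup>+z. ?D z \<partial>F0) \<le> (\<integral>\<^sup>+z. ennreal (2 * \<epsilon> + ?A + ?B * \<bar>z\<bar>) \<partial>F0)"
      by (intro nn_integral_mono nn_integral_abs_diff_eiv_kernel_le assms(4-7,9,10) True)
    also have "\<dots> = ennreal (2 * \<epsilon> + ?A + ?B * (\<integral>z. \<bar>z\<bar> \<partial>F0))"
      by (rule nn_integral_const_add_abs[OF assms(1,3)]) (use assms(7,8) in auto)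
    also have "\<dots> \<le> ennreal (4 * \<epsilon>)"
      using assms(11,12) by (intro ennreal_leI) linarith
    finally show ?thesis .
  next
    case False
    have "(\<integral>\<^sup>+z. ?D z \<partial>F0) \<le> (\<integral>\<^sup>+z. 2 \<partial>F0)"
      by (intro nn_integral_mono nn_integral_abs_diff_eiv_kernel_le_2 assms(4-7))
    also have "\<dots> \<le> ennreal (4 * \<epsilon>)"
      using False by (simp add: prob_space.emeasure_space_1[OF assms(1)] ennreal_leI)
    finally show ?thesis .
  qed
  with L1_dist_eiv_density_le[OF assms(1,2)] show ?thesis
    by (rule order_trans)
qed

end
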